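(* For every (possibly open) term $t$ with $k\notin\mathrm{fv}(t)$, $t\;(\approx^p_\emptyset)^{\circ}\;\mathcal Sk.(k\,t)$.
   Context: Terms of $\lambda_S$: $t ::= x \mid \lambda x.t \mid t\,t \mid \mathcal{S}k.t \mid \langle t\rangle$ (shift binds $k$; $\langle\cdot\rangle$ reset), up to $\alpha$-conversion; $\mathrm{fv}(t)$ free variables. Values $v::=\lambda x.t$. Pure contexts $E ::= \Box \mid v\,E \mid E\,t$; evaluation contexts $F ::= \Box \mid v\,F \mid F\,t \mid \langle F\rangle$. Reduction: $F[(\lambda x.t)v]\to F[t\{v/x\}]$; $F[\langle E[\mathcal Sk.t]\rangle]\to F[\langle t\{\lambda x.\langle E[x]\rangle/k\}\rangle]$ ($x\notin\mathrm{fv}(E)$); $F[\langle v\rangle]\to F[v]$; $\to^*$ reflexive-transitive closure. Program: term $\langle t\rangle$ (ranged over by $p$). Closures: for $R$ a relation on closed terms, $\widetilde R$ is the smallest relation containing $R$, all $(x,x)$, closed under all term constructors, restricted to closed terms; $\widehat R$ is the smallest relation on closed evaluation contexts with $\Box\widehat R\Box$, $v_0F_0\widehat Rv_1F_1$ if $F_0\widehat RF_1,v_0\widetilde Rv_1$; $F_0t_0\widehat RF_1t_1$ if $F_0\widehat RF_1,t_0\widetilde Rt_1$; $\langle F_0\rangle\widehat R\langle F_1\rangle$ if $F_0\widehat RF_1$. Environmental bisimilarity for programs: an environment $\mathcal E$ is a relation on closed values; an environmental relation $\mathcal X$ is a set of environments and triples $(\mathcal E,t_0,t_1)$, $t_0,t_1$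 closed, written $t_0\mathcal X_{\mathcal E}t_1$. $\mathcal X$ is an environmental bisimulation for programs if (1) if $t_0\mathcal X_{\mathcal E}t_1$ and $t_0,t_1$ are not both programs, then for all pure $E_0\widehat{\mathcal E}E_1$, $\langle E_0[t_0]\rangle\mathcal X_{\mathcal E}\langle E_1[t_1]\rangle$; (2) if $p_0\mathcal X_{\mathcal E}p_1$: (a) $p_0\to p_0'$ (program) implies $p_1\to^*p_1'$ (program) with $p_0'\mathcal X_{\mathcal E}p_1'$; (b) $p_0\to v_0$ implies $p_1\to^*v_1$ and $\{(v_0,v_1)\}\cup\mathcal E\in\mathcal X$; (c) symmetric conditions; (3) for $\mathcal E\in\mathcal X$, $(\lambda x.t_0)\mathcal E(\lambda x.t_1)$ and $v_0\widetilde{\mathcal E}v_1$ imply $t_0\{v_0/x\}\mathcal X_{\mathcal E}t_1\{v_1/x\}$. $\approx^p$ is the largest such relation; $t_0\approx^p_{\emptyset}t_1$ means $(\emptyset,t_0,t_1)\in\approx^p$. Open extension: for terms $t_0,t_1$ with $\vec x=\mathrm{fv}(t_0)\cup\mathrm{fv}(t_1)$, $t_0\,(\approx^p_\emptyset)^\circ\,t_1$ iff $\lambda\vec x.t_0\approx^p_\emptyset\lambda\vec x.t_1$, where $\lambda\vec x.t$ abstracts the variables of $\vec x$ in succession. *)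

theory Defs
  imports Main
begin

text \<open>Terms up to alpha-conversion are represented with de Bruijn indices.
  Both Lam and Shift bind index 0 in their body.  A free index n (at top level)
  denotes the free variable named n.\<close>

datatype trm = Var nat | Lam trm | App trm trm | Shift trm | Reset trm

fun fv :: "trm \<Rightarrow> nat set" where
  "fv (Var n) = {n}"
| "fv (Lam t) = (\<lambda>n. n - 1) ` (fv t - {0})"
| "fv (App t s) = fv t \<union> fv s"
| "fv (Shift t) = (\<lambda>n. n - 1) ` (fv t - {0})"
| "fv (Reset t) = fv t"

definition closed :: "trm \<Rightarrow> bool" where
  "closed t \<longleftrightarrow> fv t = {}"

definition is_val :: "trm \<Rightarrow> bool" where
  "is_val t \<longleftrightarrow> (\<exists>b. t = Lam b)"

definition is_prog :: "trm \<Rightarrow> bool" where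
  "is_prog t \<longleftrightarrow> (\<exists>s. t = Reset s)"

fun lift :: "nat \<Rightarrow> trm \<Rightarrow> trm" where
  "lift k (Var i) = (if i < k then Var i else Var (Suc i))"
| "lift k (Lam t) = Lam (lift (Suc k) t)"
| "lift k (App t s) = App (lift k t) (lift k s)"
| "lift k (Shift t) = Shift (lift (Suc k) t)"
| "lift k (Reset t) = Reset (lift k t)"

text \<open>Capture-avoiding substitution: subst t k s replaces index k by s
  (and decrements the larger indices).  t{v/x} for the body t of a binder is subst t 0 v.\<close>
fun subst :: "trm \<Rightarrow> nat \<Rightarrow> trm \<Rightarrow> trm" where
  "subst (Var i) k s = (if i < k then Var i else if i = k then s else Var (i - 1))"
| "subst (Lam t) k s = Lam (subst t (Suc k) (lift 0 s))"
| "subst (App t u) k s = App (subst t k s) (subst u k s)"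
| "subst (Shift t) k s = Shift (subst t (Suc k) (lift 0 s))"
| "subst (Reset t) k s = Reset (subst t k s)"

datatype ctx = Hole | CAppR trm ctx | CAppL ctx trm | CReset ctx

fun plug :: "ctx \<Rightarrow> trm \<Rightarrow> trm" where
  "plug Hole t = t"
| "plug (CAppR v F) t = App v (plug F t)"
| "plug (CAppL F s) t = App (plug F t) s"
| "plug (CReset F) t = Reset (plug F t)"

fun lift_ctx :: "nat \<Rightarrow> ctx \<Rightarrow> ctx" where
  "lift_ctx k Hole = Hole"
| "lift_ctx k (CAppR v F) = CAppR (lift k v) (lift_ctx k F)"
| "lift_ctx k (CAppL F s) = CAppL (lift_ctx k F) (lift k s)"
| "lift_ctx k (CReset F) = CReset (lift_ctx k F)"

fun pure_ctx :: "ctx \<Rightarrow> bool" where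
  "pure_ctx Hole = True"
| "pure_ctx (CAppR v F) = (is_val v \<and> pure_ctx F)"
| "pure_ctx (CAppL F s) = pure_ctx F"
| "pure_ctx (CReset F) = False"

fun eval_ctx :: "ctx \<Rightarrow> bool" where
  "eval_ctx Hole = True"
| "eval_ctx (CAppR v F) = (is_val v \<and> eval_ctx F)"
| "eval_ctx (CAppL F s) = eval_ctx F"
| "eval_ctx (CReset F) = eval_ctx F"

inductive red :: "trm \<Rightarrow> trm \<Rightarrow> bool" where
  beta: "\<lbrakk>eval_ctx F; is_val v\<rbrakk> \<Longrightarrow>
     red (plug F (App (Lam t) v)) (plug F (subst t 0 v))"
| shift: "\<lbrakk>eval_ctx F; pure_ctx E\<rbrakk> \<Longrightarrow>
     red (plug F (Reset (plug E (Shift t))))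
         (plug F (Reset (subst t 0 (Lam (Reset (plug (lift_ctx 0 E) (Var 0)))))))"
| reset: "\<lbrakk>eval_ctx F; is_val v\<rbrakk> \<Longrightarrow>
     red (plug F (Reset v)) (plug F v)"

abbreviation reds :: "trm \<Rightarrow> trm \<Rightarrow> bool" where
  "reds \<equiv> red\<^sup>*\<^sup>*"

type_synonym env = "(trm \<times> trm) set"

inductive tilde_raw :: "env \<Rightarrow> trm \<Rightarrow> trm \<Rightarrow> bool" for R where
  base: "(t0, t1) \<in> R \<Longrightarrow> tilde_raw R t0 t1"
| var: "tilde_raw R (Var n) (Var n)"
| lam: "tilde_raw R t0 t1 \<Longrightarrow> tilde_raw R (Lam t0) (Lam t1)"
| app: "\<lbrakk>tilde_raw R t0 t1; tilde_raw R s0 s1\<rbrakk> \<Longrightarrow> tilde_raw R (App t0 s0) (App t1 s1)"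
| shift: "tilde_raw R t0 t1 \<Longrightarrow> tilde_raw R (Shift t0) (Shift t1)"
| reset: "tilde_raw R t0 t1 \<Longrightarrow> tilde_raw R (Reset t0) (Reset t1)"

definition tilde :: "env \<Rightarrow> trm \<Rightarrow> trm \<Rightarrow> bool" where
  "tilde R t0 t1 \<longleftrightarrow> tilde_raw R t0 t1 \<and> closed t0 \<and> closed t1"

inductive ctx_hat :: "env \<Rightarrow> ctx \<Rightarrow> ctx \<Rightarrow> bool" for R where
  hole: "ctx_hat R Hole Hole"
| appR: "\<lbrakk>ctx_hat R F0 F1; is_val v0; is_val v1; tilde R v0 v1\<rbrakk> \<Longrightarrow>
     ctx_hat R (CAppR v0 F0) (CAppR v1 F1)"
| appL: "\<lbrakk>ctx_hat R F0 F1; tilde R t0 t1\<rbrakk> \<Longrightarrow> ctx_hat R (CAppL F0 t0) (CAppL F1 t1)"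
| reset: "ctx_hat R F0 F1 \<Longrightarrow> ctx_hat R (CReset F0) (CReset F1)"

text \<open>An environmental relation is given by its set of environments Es and its
  set of triples Ts.\<close>

definition is_env :: "env \<Rightarrow> bool" where
  "is_env E \<longleftrightarrow> (\<forall>a b. (a, b) \<in> E \<longrightarrow> closed a \<and> closed b \<and> is_val a \<and> is_val b)"

definition env_bisim :: "env set \<Rightarrow> (env \<times> trm \<times> trm) set \<Rightarrow> bool" where
  "env_bisim Es Ts \<longleftrightarrow>
    (\<forall>E\<in>Es. is_env E) \<and>
    (\<forall>E t0 t1. (E, t0, t1) \<in> Ts \<longrightarrow> is_env E \<and> closed t0 \<and> closed t1) \<and>
    \<comment> \<open>(1)\<close>
    (\<forall>E t0 t1. (E, t0, t1) \<in> Ts \<longrightarrow> \<not> (is_prog t0 \<and> is_prog t1) \<longrightarrow>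
       (\<forall>E0 E1. pure_ctx E0 \<and> pure_ctx E1 \<and> ctx_hat E E0 E1 \<longrightarrow>
          (E, Reset (plug E0 t0), Reset (plug E1 t1)) \<in> Ts)) \<and>
    \<comment> \<open>(2)\<close>
    (\<forall>E p0 p1. (E, p0, p1) \<in> Ts \<longrightarrow> is_prog p0 \<longrightarrow> is_prog p1 \<longrightarrow>
       (\<forall>p0'. red p0 p0' \<and> is_prog p0' \<longrightarrow>
          (\<exists>p1'. reds p1 p1' \<and> is_prog p1' \<and> (E, p0', p1') \<in> Ts)) \<and>
       (\<forall>v0. red p0 v0 \<and> is_val v0 \<longrightarrow>
          (\<exists>v1. reds p1 v1 \<and> is_val v1 \<and> insert (v0, v1) E \<in> Es)) \<and>
       (\<forall>p1'. red p1 p1' \<and> is_prog p1' \<longrightarrow>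
          (\<exists>p0'. reds p0 p0' \<and> is_prog p0' \<and> (E, p0', p1') \<in> Ts)) \<and>
       (\<forall>v1. red p1 v1 \<and> is_val v1 \<longrightarrow>
          (\<exists>v0. reds p0 v0 \<and> is_val v0 \<and> insert (v0, v1) E \<in> Es))) \<and>
    \<comment> \<open>(3)\<close>
    (\<forall>E\<in>Es. \<forall>t0 t1 v0 v1. (Lam t0, Lam t1) \<in> E \<and> is_val v0 \<and> is_val v1 \<and> tilde E v0 v1 \<longrightarrow>
       (E, subst t0 0 v0, subst t1 0 v1) \<in> Ts)"

definition prog_bisimilar :: "env \<Rightarrow> trm \<Rightarrow> trm \<Rightarrow> bool" where
  "prog_bisimilar E t0 t1 \<longleftrightarrow> (\<exists>Es Ts. env_bisim Es Ts \<and> (E, t0, t1) \<in> Ts)"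

text \<open>Abstraction of the free variable x: abst x t = \<lambda>x.t.\<close>
fun abst_aux :: "nat \<Rightarrow> nat \<Rightarrow> trm \<Rightarrow> trm" where
  "abst_aux x d (Var i) = (if i < d then Var i else if i = d + x then Var d else Var (Suc i))"
| "abst_aux x d (Lam t) = Lam (abst_aux x (Suc d) t)"
| "abst_aux x d (App t s) = App (abst_aux x d t) (abst_aux x d s)"
| "abst_aux x d (Shift t) = Shift (abst_aux x (Suc d) t)"
| "abst_aux x d (Reset t) = Reset (abst_aux x d t)"

definition abst :: "nat \<Rightarrow> trm \<Rightarrow> trm" where
  "abst x t = Lam (abst_aux x 0 t)"

definition abst_vars :: "nat list \<Rightarrow> trm \<Rightarrow> trm" where
  "abst_vars xs t = foldr abst xs t"

definition open_bisimilar :: "trm \<Rightarrow> trm \<Rightarrow> bool" where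
  "open_bisimilar t0 t1 \<longleftrightarrow>
     (let xs = sorted_list_of_set (fv t0 \<union> fv t1)
      in prog_bisimilar {} (abst_vars xs t0) (abst_vars xs t1))"

end

theory Submission
  imports Defs
begin

text \<open>
  Relate t to Sk.k t under arbitrary term constructors, and add the intermediate states the
  right-hand program passes through. When Sk.k t' captures the pure context E of its enclosing
  reset, the right program becomes \<langle>(\<lambda>x.\<langle>E[x]\<rangle>) t'\<rangle>, which the
  unchanged left program \<langle>E[t]\<rangle> matches (rule captured); once t' has become a value v,
  the beta-step yields \<langle>\<langle>E[v]\<rangle>\<rangle>, related to \<langle>E[v]\<rangle> up to a
  redundant reset (rule reset_reset). The index of shift_elim bounds the number of such
  administrative steps still available on the right, so every right step is matched either by a
  left step or by the left side standing still while the index decreases. Since reduction is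
  deterministic and closed programs never get stuck, every left step is in turn answered by
  finitely many right steps.
\<close>

fun ctx_comp :: "ctx \<Rightarrow> ctx \<Rightarrow> ctx" where
  "ctx_comp Hole F = F"
| "ctx_comp (CAppR v E) F = CAppR v (ctx_comp E F)"
| "ctx_comp (CAppL E s) F = CAppL (ctx_comp E F) s"
| "ctx_comp (CReset E) F = CReset (ctx_comp E F)"

lemma plug_ctx_comp[simp]: "plug (ctx_comp E F) t = plug E (plug F t)"
  by (induction E) auto

lemma pure_ctx_comp: "pure_ctx E \<Longrightarrow> pure_ctx F \<Longrightarrow> pure_ctx (ctx_comp E F)"
  by (induction E) auto

lemma eval_ctx_comp: "eval_ctx E \<Longrightarrow> eval_ctx F \<Longrightarrow> eval_ctx (ctx_comp E F)"
  by (induction E) auto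

lemma pure_imp_eval_ctx: "pure_ctx E \<Longrightarrow> eval_ctx E"
  by (induction E) auto

lemma lift_ctx_comp[simp]: "lift_ctx k (ctx_comp E F) = ctx_comp (lift_ctx k E) (lift_ctx k F)"
  by (induction E) auto

lemma lift_plug[simp]: "lift k (plug E t) = plug (lift_ctx k E) (lift k t)"
  by (induction E) auto

fun subst_ctx :: "ctx \<Rightarrow> nat \<Rightarrow> trm \<Rightarrow> ctx" where
  "subst_ctx Hole k v = Hole"
| "subst_ctx (CAppR u E) k v = CAppR (subst u k v) (subst_ctx E k v)"
| "subst_ctx (CAppL E s) k v = CAppL (subst_ctx E k v) (subst s k v)"
| "subst_ctx (CReset E) k v = CReset (subst_ctx E k v)"

lemma subst_plug[simp]: "subst (plug E t) k v = plug (subst_ctx E k v) (subst t k v)"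
  by (induction E) auto

lemma is_val_lift[simp]: "is_val (lift k v) = is_val v"
  by (cases v) (auto simp: is_val_def)

lemma is_val_subst: "is_val v \<Longrightarrow> is_val (subst v k s)"
  by (auto simp: is_val_def)

lemma pure_lift_ctx[simp]: "pure_ctx (lift_ctx k E) = pure_ctx E"
  by (induction E) auto

lemma pure_subst_ctx: "pure_ctx E \<Longrightarrow> pure_ctx (subst_ctx E k v)"
  by (induction E) (auto simp: is_val_subst)

definition ren_up :: "(nat \<Rightarrow> nat) \<Rightarrow> nat \<Rightarrow> nat" where
  "ren_up f i = (case i of 0 \<Rightarrow> 0 | Suc j \<Rightarrow> Suc (f j))"

lemma ren_up_0[simp]: "ren_up f 0 = 0"
  and ren_up_Suc[simp]: "ren_up f (Suc j) = Suc (f j)"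
  by (auto simp: ren_up_def)

lemma ren_up_comp: "ren_up f \<circ> ren_up g = ren_up (f \<circ> g)"
  by (auto simp: fun_eq_iff ren_up_def split: nat.split)

fun ren :: "(nat \<Rightarrow> nat) \<Rightarrow> trm \<Rightarrow> trm" where
  "ren f (Var i) = Var (f i)"
| "ren f (Lam t) = Lam (ren (ren_up f) t)"
| "ren f (App t s) = App (ren f t) (ren f s)"
| "ren f (Shift t) = Shift (ren (ren_up f) t)"
| "ren f (Reset t) = Reset (ren f t)"

fun ren_ctx :: "(nat \<Rightarrow> nat) \<Rightarrow> ctx \<Rightarrow> ctx" where
  "ren_ctx f Hole = Hole"
| "ren_ctx f (CAppR v E) = CAppR (ren f v) (ren_ctx f E)"
| "ren_ctx f (CAppL E s) = CAppL (ren_ctx f E) (ren f s)"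
| "ren_ctx f (CReset E) = CReset (ren_ctx f E)"

lemma ren_plug[simp]: "ren f (plug E t) = plug (ren_ctx f E) (ren f t)"
  by (induction E) auto

lemma ren_ren: "ren f (ren g t) = ren (f \<circ> g) t"
  by (induction t arbitrary: f g) (auto simp: ren_up_comp)

lemma is_val_ren[simp]: "is_val (ren f v) = is_val v"
  by (cases v) (auto simp: is_val_def)

lemma pure_ren_ctx[simp]: "pure_ctx (ren_ctx f E) = pure_ctx E"
  by (induction E) auto

definition lift_fun :: "nat \<Rightarrow> nat \<Rightarrow> nat" where
  "lift_fun k i = (if i < k then i else Suc i)"

lemma ren_up_lift_fun: "ren_up (lift_fun k) = lift_fun (Suc k)"
  by (auto simp: ren_up_def lift_fun_def fun_eq_iff split: nat.split)

lemma lift_eq_ren: "lift k t = ren (lift_fun k) t"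
  by (induction t arbitrary: k) (auto simp: ren_up_lift_fun lift_fun_def)

lemma lift_ctx_eq_ren_ctx: "lift_ctx k E = ren_ctx (lift_fun k) E"
  by (induction E) (auto simp: lift_eq_ren)

lemma ren_up_lift: "ren (ren_up f) (lift 0 t) = lift 0 (ren f t)"
proof -
  have "ren_up f \<circ> lift_fun 0 = lift_fun 0 \<circ> f"
    by (auto simp: fun_eq_iff lift_fun_def)
  then show ?thesis
    by (simp add: lift_eq_ren ren_ren)
qed

lemma ren_ctx_ren_up_lift_ctx: "ren_ctx (ren_up f) (lift_ctx 0 E) = lift_ctx 0 (ren_ctx f E)"
  by (induction E) (auto simp: ren_up_lift)

lemma lift_lift: "i \<le> j \<Longrightarrow> lift i (lift j t) = lift (Suc j) (lift i t)"
proof -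
  assume "i \<le> j"
  then have "lift_fun i \<circ> lift_fun j = lift_fun (Suc j) \<circ> lift_fun i"
    by (auto simp: fun_eq_iff lift_fun_def)
  then show ?thesis
    by (simp add: lift_eq_ren ren_ren)
qed

lemma lift_ctx_lift_ctx: "lift_ctx (Suc 0) (lift_ctx 0 E) = lift_ctx 0 (lift_ctx 0 E)"
  by (induction E) (auto simp: lift_lift)

lemma subst_lift_Suc: "j \<le> k \<Longrightarrow> subst (lift j t) (Suc k) (lift j v) = lift j (subst t k v)"
  by (induction t arbitrary: j k v) (auto simp: lift_lift)

lemma subst_ctx_lift_ctx_Suc: "subst_ctx (lift_ctx 0 E) (Suc k) (lift 0 v) = lift_ctx 0 (subst_ctx E k v)"
  by (induction E) (auto simp: subst_lift_Suc)

lemma subst_lift[simp]: "subst (lift k t) k v = t"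
  by (induction t arbitrary: k v) auto

lemma subst_ctx_lift_ctx[simp]: "subst_ctx (lift_ctx k E) k v = E"
  by (induction E) auto

definition abst_fun :: "nat \<Rightarrow> nat \<Rightarrow> nat \<Rightarrow> nat" where
  "abst_fun x d i = (if i < d then i else if i = d + x then d else Suc i)"

lemma ren_up_abst_fun: "ren_up (abst_fun x d) = abst_fun x (Suc d)"
  by (auto simp: ren_up_def abst_fun_def fun_eq_iff split: nat.split)

lemma abst_aux_eq_ren: "abst_aux x d t = ren (abst_fun x d) t"
  by (induction t arbitrary: d) (auto simp: ren_up_abst_fun abst_fun_def)

lemma fv_binder[simp]: "(\<lambda>n. n - Suc 0) ` (S - {0}) = {i. Suc i \<in> S}"
proof (rule set_eqI)
  fix i
  show "i \<in> (\<lambda>n. n - Suc 0) ` (S - {0}) \<longleftrightarrow> i \<in> {i. Suc i \<in> S}"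
  proof
    assume "i \<in> (\<lambda>n. n - Suc 0) ` (S - {0})"
    then obtain n where "n \<in> S" "n \<noteq> 0" "i = n - Suc 0" by blast
    then show "i \<in> {i. Suc i \<in> S}" by (cases n) auto
  qed (auto intro!: image_eqI[where x="Suc i"])
qed

lemma finite_fv: "finite (fv t)"
  by (induction t) (simp_all add: finite_vimageI[of _ Suc, unfolded vimage_def])

lemma binder_ren_up_image: "{i. Suc i \<in> ren_up f ` S} = f ` {j. Suc j \<in> S}"
proof (rule set_eqI)
  fix i
  show "i \<in> {i. Suc i \<in> ren_up f ` S} \<longleftrightarrow> i \<in> f ` {j. Suc j \<in> S}"
  proof
    assume "i \<in> {i. Suc i \<in> ren_up f ` S}"
    then obtain y where "y \<in> S" "Suc i = ren_up f y" by blast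
    then show "i \<in> f ` {j. Suc j \<in> S}" by (cases y) auto
  next
    assume "i \<in> f ` {j. Suc j \<in> S}"
    then obtain j where "Suc j \<in> S" "i = f j" by blast
    then show "i \<in> {i. Suc i \<in> ren_up f ` S}" by (metis mem_Collect_eq image_eqI ren_up_Suc)
  qed
qed

lemma fv_ren: "fv (ren f t) = f ` fv t"
  by (induction t arbitrary: f) (simp_all add: binder_ren_up_image image_Un)

fun closed_at :: "nat \<Rightarrow> trm \<Rightarrow> bool" where
  "closed_at k (Var i) = (i < k)"
| "closed_at k (Lam t) = closed_at (Suc k) t"
| "closed_at k (App t s) = (closed_at k t \<and> closed_at k s)"
| "closed_at k (Shift t) = closed_at (Suc k) t"
| "closed_at k (Reset t) = closed_at k t"

lemma binder_subset_lessThan: "{i. Suc i \<in> S} \<subseteq> {..<k} \<longleftrightarrow> S \<subseteq> {..<Suc k}"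
  by (auto simp: subset_iff less_Suc_eq_0_disj) (metis not0_implies_Suc)

lemma closed_at_iff_fv: "closed_at k t \<longleftrightarrow> fv t \<subseteq> {..<k}"
  by (induction t arbitrary: k) (auto simp: binder_subset_lessThan)

lemma closed_iff_closed_at_0: "closed t \<longleftrightarrow> closed_at 0 t"
  by (simp add: closed_def closed_at_iff_fv)

lemma closed_at_lift: "closed_at k t \<Longrightarrow> closed_at (Suc k) (lift j t)"
  by (induction t arbitrary: k j) auto

lemma closed_at_subst: "closed_at (Suc k) t \<Longrightarrow> closed_at k v \<Longrightarrow> j \<le> k \<Longrightarrow> closed_at k (subst t j v)"
  by (induction t arbitrary: k j v) (auto simp: closed_at_lift)

lemma closed_at_plugD: "closed_at k (plug E t) \<Longrightarrow> closed_at k t"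
  by (induction E) auto

lemma closed_at_plug_replace: "closed_at k (plug E t) \<Longrightarrow> closed_at k s \<Longrightarrow> closed_at k (plug E s)"
  by (induction E) auto

section \<open>Structural reduction\<close>

inductive step :: "trm \<Rightarrow> trm \<Rightarrow> bool" where
  beta: "is_val v \<Longrightarrow> step (App (Lam t) v) (subst t 0 v)"
| app_left: "step t t' \<Longrightarrow> step (App t s) (App t' s)"
| app_right: "is_val v \<Longrightarrow> step s s' \<Longrightarrow> step (App v s) (App v s')"
| reset_val: "is_val v \<Longrightarrow> step (Reset v) v"
| capture: "pure_ctx E \<Longrightarrow>
     step (Reset (plug E (Shift t))) (Reset (subst t 0 (Lam (Reset (plug (lift_ctx 0 E) (Var 0))))))"
| reset: "step t t' \<Longrightarrow> step (Reset t) (Reset t')"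

inductive_cases step_AppE: "step (App t s) r"
inductive_cases step_ResetE: "step (Reset t) r"
inductive_cases step_LamE[elim!]: "step (Lam t) r"
inductive_cases step_VarE[elim!]: "step (Var i) r"
inductive_cases step_ShiftE[elim!]: "step (Shift t) r"

lemma step_plug: "eval_ctx F \<Longrightarrow> step a b \<Longrightarrow> step (plug F a) (plug F b)"
  by (induction F) (auto intro: step.intros)

lemma red_imp_step: "red a b \<Longrightarrow> step a b"
  by (induction rule: red.induct) (auto intro!: step_plug intro: step.intros)

lemma red_plug: "red a b \<Longrightarrow> eval_ctx G \<Longrightarrow> red (plug G a) (plug G b)"
proof (induction rule: red.induct)
  case (beta F v t)
  then show ?case using red.beta[of "ctx_comp G F" v t] by (simp add: eval_ctx_comp)
next
  case (shift F E t)
  then show ?case using red.shift[of "ctx_comp G F" E t] by (simp add: eval_ctx_comp)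
next
  case (reset F v)
  then show ?case using red.reset[of "ctx_comp G F" v] by (simp add: eval_ctx_comp)
qed

lemma step_imp_red: "step a b \<Longrightarrow> red a b"
proof (induction rule: step.induct)
  case (beta v t)
  then show ?case using red.beta[of Hole v t] by simp
next
  case (app_left t t' s)
  then show ?case using red_plug[of t t' "CAppL Hole s"] by simp
next
  case (app_right v s s')
  then show ?case using red_plug[of s s' "CAppR v Hole"] by simp
next
  case (reset_val v)
  then show ?case using red.reset[of Hole v] by simp
next
  case (capture E t)
  then show ?case using red.shift[of Hole E t] by simp
next
  case (reset t t')
  then show ?case using red_plug[of t t' "CReset Hole"] by simp
qed

lemma red_eq_step: "red = step"
  using red_imp_step step_imp_red by blast

lemma prog_not_val: "is_prog t \<Longrightarrow> \<not> is_val t"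
  by (auto simp: is_prog_def is_val_def)

lemma val_no_step: "is_val v \<Longrightarrow> \<not> step v r"
  by (auto simp: is_val_def)

lemma plug_Shift_not_val: "pure_ctx E \<Longrightarrow> \<not> is_val (plug E (Shift u))"
  by (cases E) (auto simp: is_val_def)

lemma plug_Shift_neq[simp]:
  "pure_ctx E \<Longrightarrow> plug E (Shift u) \<noteq> Lam b"
  "pure_ctx E \<Longrightarrow> plug E (Shift u) \<noteq> Reset b"
  by (cases E; auto)+

lemma plug_Shift_no_step: "pure_ctx E \<Longrightarrow> \<not> step (plug E (Shift u)) r"
  by (induction E arbitrary: r) (auto elim!: step_AppE simp: val_no_step plug_Shift_not_val)

lemma plug_Shift_inj:
  "pure_ctx E \<Longrightarrow> pure_ctx E' \<Longrightarrow> plug E (Shift u) = plug E' (Shift u') \<Longrightarrow> E = E' \<and> u = u'"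
proof (induction E arbitrary: E')
  case Hole
  then show ?case by (cases E') auto
next
  case (CAppR v E)
  then show ?case using plug_Shift_not_val by (cases E') (auto simp: is_val_def)
next
  case (CAppL E s)
  then show ?case using plug_Shift_not_val by (cases E') (auto simp: is_val_def)
qed simp

lemma step_deterministic: "step t a \<Longrightarrow> step t b \<Longrightarrow> a = b"
proof (induction arbitrary: b rule: step.induct)
  case (beta v t)
  from beta.prems show ?case
    by (rule step_AppE) (use beta.hyps val_no_step[of v] in \<open>auto simp: is_val_def\<close>)
next
  case (app_left t t' s)
  from app_left.prems show ?case
  proof (rule step_AppE)
    fix t'' assume "step t t''" "b = App t'' s"
    then show ?thesis using app_left.IH by simp
  qed (use app_left.hyps val_no_step in blast)+
next
  case (app_right v s s')
  from app_right.prems show ?case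
  proof (rule step_AppE)
    fix s'' assume "step s s''" "b = App v s''"
    then show ?thesis using app_right.IH by simp
  qed (use app_right.hyps val_no_step in blast)+
next
  case (reset_val v)
  from reset_val.prems show ?case
    by (rule step_ResetE) (use reset_val val_no_step[of v] plug_Shift_not_val in auto)
next
  case (capture E t)
  from capture.prems show ?case
  proof (rule step_ResetE)
    fix E' u assume "plug E (Shift t) = plug E' (Shift u)" "pure_ctx E'"
      "b = Reset (subst u 0 (Lam (Reset (plug (lift_ctx 0 E') (Var 0)))))"
    then show ?thesis using plug_Shift_inj[of E E' t u] capture.hyps by auto
  qed (use capture.hyps plug_Shift_not_val plug_Shift_no_step in auto)
next
  case (reset t t')
  from reset.prems show ?case
  proof (rule step_ResetE)
    fix t'' assume "step t t''" "b = Reset t''"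
    then show ?thesis using reset.IH by simp
  qed (use reset.hyps val_no_step plug_Shift_no_step in blast)+
qed

lemma progress:
  "closed_at 0 t \<Longrightarrow> is_val t \<or> (\<exists>t'. step t t') \<or> (\<exists>E u. pure_ctx E \<and> t = plug E (Shift u))"
proof (induction t)
  case (App t s)
  then have IH_t: "is_val t \<or> (\<exists>t'. step t t') \<or> (\<exists>E u. pure_ctx E \<and> t = plug E (Shift u))"
    and IH_s: "is_val s \<or> (\<exists>s'. step s s') \<or> (\<exists>E u. pure_ctx E \<and> s = plug E (Shift u))"
    by auto
  show ?case
  proof (cases "is_val t")
    case True
    then obtain b where b: "t = Lam b" by (auto simp: is_val_def)
    from IH_s show ?thesis
    proof (elim disjE exE conjE)
      fix E u assume "pure_ctx E" "s = plug E (Shift u)"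
      then show ?thesis using True by (intro disjI2 exI[of _ "CAppR t E"]) auto
    qed (use True b in \<open>blast intro: step.intros\<close>)+
  next
    case False
    from IH_t show ?thesis
    proof (elim disjE exE conjE)
      fix E u assume "pure_ctx E" "t = plug E (Shift u)"
      then show ?thesis by (intro disjI2 exI[of _ "CAppL E s"]) auto
    qed (use False in \<open>blast intro: step.intros\<close>)+
  qed
next
  case (Shift t)
  show ?case by (intro disjI2 exI[of _ Hole]) auto
next
  case (Reset t)
  then show ?case by (auto intro: step.intros)
qed (auto simp: is_val_def)

lemma prog_has_step: "closed_at 0 t \<Longrightarrow> is_prog t \<Longrightarrow> \<exists>t'. step t t'"
proof -
  assume "closed_at 0 t" "is_prog t"
  then obtain s where "t = Reset s" "closed_at 0 s" by (auto simp: is_prog_def)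
  with progress[of s] show ?thesis by (auto intro: step.intros)
qed

lemma step_closed_at: "step t t' \<Longrightarrow> closed_at k t \<Longrightarrow> closed_at k t'"
proof (induction arbitrary: k rule: step.induct)
  case (beta v t)
  then show ?case by (auto intro: closed_at_subst)
next
  case (capture E t)
  then have "closed_at k (plug E (Shift t))" by simp
  then have "closed_at (Suc k) t" "closed_at (Suc k) (plug (lift_ctx 0 E) (Var 0))"
    using closed_at_plugD[of k E "Shift t"] closed_at_lift[of k "plug E (Shift t)" 0]
    by (auto intro: closed_at_plug_replace)
  then show ?case by (auto intro!: closed_at_subst)
qed auto

lemma steps_closed_at: "step\<^sup>*\<^sup>* t t' \<Longrightarrow> closed_at k t \<Longrightarrow> closed_at k t'"
  by (induction rule: rtranclp_induct) (auto intro: step_closed_at)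

lemma step_prog: "step t t' \<Longrightarrow> is_prog t \<Longrightarrow> is_prog t' \<or> is_val t'"
  by (auto simp: is_prog_def elim!: step_ResetE)

lemma steps_prog: "step\<^sup>*\<^sup>* t t' \<Longrightarrow> is_prog t \<Longrightarrow> is_prog t' \<or> is_val t'"
  by (induction rule: rtranclp_induct) (use step_prog val_no_step in blast)+

section \<open>The candidate relation\<close>

text \<open>In marker, Shift (App (Var 0) (lift 0 t1)) is Sk.k t1 with k not free in t1.
  In captured, Reset (plug (lift_ctx 0 E0) (Var 0)) is the body \<langle>E0[x]\<rangle> of the
  continuation \<lambda>x.\<langle>E0[x]\<rangle> that a shift captures from E0.\<close>

inductive shift_elim :: "nat \<Rightarrow> trm \<Rightarrow> trm \<Rightarrow> bool" where
  var: "shift_elim 0 (Var i) (Var i)"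
| lam: "shift_elim n t0 t1 \<Longrightarrow> shift_elim 0 (Lam t0) (Lam t1)"
| app: "shift_elim n t0 t1 \<Longrightarrow> shift_elim m s0 s1 \<Longrightarrow> shift_elim (n + m) (App t0 s0) (App t1 s1)"
| shift: "shift_elim n t0 t1 \<Longrightarrow> shift_elim 0 (Shift t0) (Shift t1)"
| reset: "shift_elim n t0 t1 \<Longrightarrow> shift_elim n (Reset t0) (Reset t1)"
| marker: "shift_elim n t0 t1 \<Longrightarrow> shift_elim (n + 3) t0 (Shift (App (Var 0) (lift 0 t1)))"
| captured: "pure_ctx E0 \<Longrightarrow> shift_elim n s0 s1 \<Longrightarrow>
    shift_elim m (Reset (plug (lift_ctx 0 E0) (Var 0))) (Reset B) \<Longrightarrow>
    shift_elim (n + m + 2) (Reset (plug E0 s0)) (Reset (App (Lam (Reset B)) s1))"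
| reset_reset: "shift_elim n (Reset a) (Reset b) \<Longrightarrow> shift_elim (Suc n) (Reset a) (Reset (Reset b))"

definition related :: "trm \<Rightarrow> trm \<Rightarrow> bool" where
  "related t0 t1 \<longleftrightarrow> (\<exists>n. shift_elim n t0 t1)"

inductive shift_elim_ctx :: "nat \<Rightarrow> ctx \<Rightarrow> ctx \<Rightarrow> bool" where
  hole: "shift_elim_ctx 0 Hole Hole"
| app_right: "shift_elim a v0 v1 \<Longrightarrow> shift_elim_ctx b E0 E1 \<Longrightarrow>
    shift_elim_ctx (a + b) (CAppR v0 E0) (CAppR v1 E1)"
| app_left: "shift_elim_ctx a E0 E1 \<Longrightarrow> shift_elim b s0 s1 \<Longrightarrow>
    shift_elim_ctx (a + b) (CAppL E0 s0) (CAppL E1 s1)"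
| reset: "shift_elim_ctx a E0 E1 \<Longrightarrow> shift_elim_ctx a (CReset E0) (CReset E1)"

lemma shift_elim_Lam_inv:
  "shift_elim n t0 (Lam b) \<Longrightarrow> n = 0 \<and> (\<exists>b0 k. t0 = Lam b0 \<and> shift_elim k b0 b)"
  by (erule shift_elim.cases) auto

lemma shift_elim_val: "shift_elim n t0 t1 \<Longrightarrow> is_val t1 \<Longrightarrow> is_val t0 \<and> n = 0"
  by (auto simp: is_val_def dest: shift_elim_Lam_inv)

lemma shift_elim_App_inv: "shift_elim n t0 (App a b) \<Longrightarrow>
    \<exists>a0 b0 i j. t0 = App a0 b0 \<and> shift_elim i a0 a \<and> shift_elim j b0 b \<and> n = i + j"
  by (erule shift_elim.cases) auto

lemma shift_elim_Shift_inv: "shift_elim n t0 (Shift u) \<Longrightarrow>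
    (\<exists>u0 k. t0 = Shift u0 \<and> shift_elim k u0 u \<and> n = 0) \<or>
    (\<exists>w k. u = App (Var 0) (lift 0 w) \<and> shift_elim k t0 w \<and> n = k + 3)"
  by (erule shift_elim.cases) auto

lemma shift_elim_Reset_prog: "shift_elim n t0 (Reset b) \<Longrightarrow> is_prog t0"
  by (erule shift_elim.cases) (auto simp: is_prog_def)

lemma shift_elim_refl: "\<exists>n. shift_elim n t t"
  by (induction t) (auto intro: shift_elim.intros)

lemma shift_elim_ren: "shift_elim n t0 t1 \<Longrightarrow> shift_elim n (ren f t0) (ren f t1)"
proof (induction arbitrary: f rule: shift_elim.induct)
  case (marker n t0 t1)
  then show ?case
    using shift_elim.marker[OF marker.IH[of f]] by (simp add: ren_up_lift)
next
  case (captured E0 n s0 s1 m B)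
  have "shift_elim m (Reset (plug (lift_ctx 0 (ren_ctx f E0)) (Var 0))) (Reset (ren (ren_up f) B))"
    using captured.IH(2)[of "ren_up f"] by (simp add: ren_ctx_ren_up_lift_ctx)
  with shift_elim.captured[OF _ captured.IH(1)] captured.hyps(1) show ?case by simp
qed (auto intro: shift_elim.intros)

lemma shift_elim_lift: "shift_elim n t0 t1 \<Longrightarrow> shift_elim n (lift k t0) (lift k t1)"
  by (simp add: lift_eq_ren shift_elim_ren)

lemma shift_elim_ctx_lift: "shift_elim_ctx a E0 E1 \<Longrightarrow> shift_elim_ctx a (lift_ctx k E0) (lift_ctx k E1)"
  by (induction rule: shift_elim_ctx.induct) (auto intro: shift_elim_ctx.intros shift_elim_lift)

lemma shift_elim_plug:
  "shift_elim_ctx a E0 E1 \<Longrightarrow> shift_elim b t0 t1 \<Longrightarrow> shift_elim (a + b) (plug E0 t0) (plug E1 t1)"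
proof (induction arbitrary: b t0 t1 rule: shift_elim_ctx.induct)
  case (app_right a v0 v1 b' E0 E1)
  from shift_elim.app[OF app_right.hyps(1) app_right.IH[OF app_right.prems]] show ?case
    by (simp add: add.assoc)
next
  case (app_left a E0 E1 b' s0 s1)
  from shift_elim.app[OF app_left.IH[OF app_left.prems] app_left.hyps(2)] show ?case
    by (simp add: ac_simps)
qed (auto intro: shift_elim.intros)

lemma shift_elim_decompose: "shift_elim n t0 (plug E1 y) \<Longrightarrow> pure_ctx E1 \<Longrightarrow>
   \<exists>E0 x a b. t0 = plug E0 x \<and> pure_ctx E0 \<and> shift_elim_ctx a E0 E1 \<and> shift_elim b x y \<and> n = a + b"
proof (induction E1 arbitrary: t0 n)
  case Hole
  then show ?case
    by (intro exI[of _ Hole] exI[of _ t0] exI[of _ 0] exI[of _ n]) (auto intro: shift_elim_ctx.intros)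
next
  case (CAppR v1 E1)
  then obtain a0 b0 i j where t0: "t0 = App a0 b0" "n = i + j"
    and v: "shift_elim i a0 v1" and b0: "shift_elim j b0 (plug E1 y)"
    by (auto dest: shift_elim_App_inv)
  from CAppR.IH[OF b0] CAppR.prems obtain E0 x a b where
    E0: "b0 = plug E0 x" "pure_ctx E0" "shift_elim_ctx a E0 E1" "shift_elim b x y" "j = a + b"
    by auto
  have "is_val a0" "i = 0" using shift_elim_val[OF v] CAppR.prems by auto
  then show ?case using t0 E0 shift_elim_ctx.app_right[OF v E0(3)]
    by (intro exI[of _ "CAppR a0 E0"] exI[of _ x] exI[of _ "i + a"] exI[of _ b]) auto
next
  case (CAppL E1 s1)
  then obtain a0 b0 i j where t0: "t0 = App a0 b0" "n = i + j"
    and a0: "shift_elim i a0 (plug E1 y)" and s: "shift_elim j b0 s1"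
    by (auto dest: shift_elim_App_inv)
  from CAppL.IH[OF a0] CAppL.prems obtain E0 x a b where
    E0: "a0 = plug E0 x" "pure_ctx E0" "shift_elim_ctx a E0 E1" "shift_elim b x y" "i = a + b"
    by auto
  then show ?case using t0 shift_elim_ctx.app_left[OF E0(3) s]
    by (intro exI[of _ "CAppL E0 b0"] exI[of _ x] exI[of _ "a + j"] exI[of _ b]) auto
qed simp

lemma shift_elim_subst:
  "shift_elim n t0 t1 \<Longrightarrow> shift_elim 0 v0 v1 \<Longrightarrow> shift_elim n (subst t0 k v0) (subst t1 k v1)"
proof (induction arbitrary: k v0 v1 rule: shift_elim.induct)
  case (lam n t0 t1)
  from shift_elim.lam[OF lam.IH[OF shift_elim_lift[OF lam.prems]]] show ?case by simp
next
  case (shift n t0 t1)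
  from shift_elim.shift[OF shift.IH[OF shift_elim_lift[OF shift.prems]]] show ?case by simp
next
  case (marker n t0 t1)
  from shift_elim.marker[OF marker.IH[OF marker.prems, of k]] show ?case
    by (simp add: subst_lift_Suc[of 0 k, simplified])
next
  case (captured E0 n s0 s1 m B)
  have "shift_elim m (subst (Reset (plug (lift_ctx 0 E0) (Var 0))) (Suc k) (lift 0 v0))
      (subst (Reset B) (Suc k) (lift 0 v1))"
    using captured.IH(2)[OF shift_elim_lift[OF captured.prems]] .
  then have "shift_elim m (Reset (plug (lift_ctx 0 (subst_ctx E0 k v0)) (Var 0)))
      (Reset (subst B (Suc k) (lift 0 v1)))"
    by (simp add: subst_ctx_lift_ctx_Suc)
  from shift_elim.captured[OF pure_subst_ctx[OF captured.hyps(1)] captured.IH(1)[OF captured.prems] this]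
  show ?case by simp
qed (auto intro: shift_elim.intros)

section \<open>Simulation\<close>

definition step_matched :: "nat \<Rightarrow> trm \<Rightarrow> trm \<Rightarrow> bool" where
  "step_matched n t0 t1' \<longleftrightarrow>
     (\<exists>m<n. shift_elim m t0 t1') \<or> (\<exists>t0' m. step t0 t0' \<and> shift_elim m t0' t1')"

lemma step_matched_Reset: "step_matched n t0 t1' \<Longrightarrow> step_matched n (Reset t0) (Reset t1')"
  unfolding step_matched_def by (blast intro: shift_elim.reset step.reset)

lemma step_matched_App_left:
  "step_matched n t0 t1' \<Longrightarrow> shift_elim m s0 s1 \<Longrightarrow> step_matched (n + m) (App t0 s0) (App t1' s1)"
  unfolding step_matched_def
  by (elim disjE exE conjE) (blast intro: shift_elim.app step.app_left add_strict_right_mono)+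

lemma step_matched_App_right:
  "is_val t0 \<Longrightarrow> shift_elim n t0 t1 \<Longrightarrow> step_matched m s0 s1' \<Longrightarrow>
    step_matched (n + m) (App t0 s0) (App t1 s1')"
  unfolding step_matched_def
  by (elim disjE exE conjE) (blast intro: shift_elim.app step.app_right add_strict_left_mono)+

lemma step_matched_captured:
  assumes "pure_ctx E0" "shift_elim m (Reset (plug (lift_ctx 0 E0) (Var 0))) (Reset B)"
    and "step_matched n s0 s1'"
  shows "step_matched (n + m + 2) (Reset (plug E0 s0)) (Reset (App (Lam (Reset B)) s1'))"
proof -
  from assms(3) consider (stutter) k where "k < n" "shift_elim k s0 s1'"
    | (step) s0' k where "step s0 s0'" "shift_elim k s0' s1'"
    unfolding step_matched_def by blast
  then show ?thesis
  proof cases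
    case stutter
    then show ?thesis
      unfolding step_matched_def using shift_elim.captured[OF assms(1) _ assms(2)] by fastforce
  next
    case step
    then have "step (Reset (plug E0 s0)) (Reset (plug E0 s0'))"
      using step_plug[of "CReset E0"] assms(1) by (simp add: pure_imp_eval_ctx)
    then show ?thesis
      unfolding step_matched_def using shift_elim.captured[OF assms(1) step(2) assms(2)] by blast
  qed
qed

lemma capture_step_matched:
  assumes G0: "pure_ctx G0" and x: "shift_elim b x (Shift u)"
    and K: "shift_elim a (Reset (plug (lift_ctx 0 G0) (Var 0))) (Reset (plug (lift_ctx 0 G) (Var 0)))"
  shows "step_matched (a + b) (Reset (plug G0 x))
           (Reset (subst u 0 (Lam (Reset (plug (lift_ctx 0 G) (Var 0))))))"
  using shift_elim_Shift_inv[OF x]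
proof (elim disjE exE conjE)
  fix u0 k assume "x = Shift u0" "shift_elim k u0 u"
  moreover have "step (Reset (plug G0 (Shift u0)))
      (Reset (subst u0 0 (Lam (Reset (plug (lift_ctx 0 G0) (Var 0))))))"
    using G0 by (rule step.capture)
  ultimately show ?thesis
    unfolding step_matched_def using shift_elim_subst[OF _ shift_elim.lam[OF K]]
    by (blast intro: shift_elim.reset)
next
  fix w k assume u: "u = App (Var 0) (lift 0 w)" "shift_elim k x w" "b = k + 3"
  with shift_elim.captured[OF G0 u(2) K] show ?thesis
    unfolding step_matched_def by (intro disjI1 exI[of _ "k + a + 2"]) simp
qed

lemma shift_elim_continuation: "shift_elim_ctx a E0 E \<Longrightarrow>
    shift_elim a (plug (lift_ctx 0 E0) (Var 0)) (plug (lift_ctx 0 E) (Var 0))"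
  using shift_elim_plug[OF shift_elim_ctx_lift shift_elim.var] by simp

lemma App_step_matched:
  assumes t: "shift_elim n t0 t1" and s: "shift_elim m s0 s1"
    and IH_t: "\<And>t1'. step t1 t1' \<Longrightarrow> step_matched n t0 t1'"
    and IH_s: "\<And>s1'. step s1 s1' \<Longrightarrow> step_matched m s0 s1'"
    and "step (App t1 s1) r"
  shows "step_matched (n + m) (App t0 s0) r"
  using assms(5)
proof (rule step_AppE)
  fix b1 assume b1: "t1 = Lam b1" "r = subst b1 0 s1" "is_val s1"
  obtain b0 k where "t0 = Lam b0" "shift_elim k b0 b1"
    using shift_elim_Lam_inv t b1(1) by blast
  moreover have "is_val s0" "m = 0"
    using shift_elim_val[OF s b1(3)] by auto
  ultimately show ?thesis
    unfolding step_matched_def using b1 s by (blast intro: step.beta shift_elim_subst)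
next
  fix t1' assume "r = App t1' s1" "step t1 t1'"
  then show ?thesis using step_matched_App_left[OF IH_t s] by simp
next
  fix s1' assume "r = App t1 s1'" "is_val t1" "step s1 s1'"
  then show ?thesis using step_matched_App_right[OF _ t IH_s] shift_elim_val[OF t] by simp
qed

lemma Reset_step_matched:
  assumes t: "shift_elim n t0 t1"
    and IH: "\<And>t1'. step t1 t1' \<Longrightarrow> step_matched n t0 t1'"
    and "step (Reset t1) r"
  shows "step_matched n (Reset t0) r"
  using assms(3)
proof (rule step_ResetE)
  assume "r = t1" "is_val t1"
  then show ?thesis
    unfolding step_matched_def using shift_elim_val[OF t] t by (blast intro: step.reset_val)
next
  fix E u assume E: "t1 = plug E (Shift u)" "pure_ctx E"
    and r: "r = Reset (subst u 0 (Lam (Reset (plug (lift_ctx 0 E) (Var 0)))))"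
  then obtain E0 x a b where d: "t0 = plug E0 x" "pure_ctx E0" "shift_elim_ctx a E0 E"
    "shift_elim b x (Shift u)" "n = a + b"
    using shift_elim_decompose t by blast
  have "shift_elim a (Reset (plug (lift_ctx 0 E0) (Var 0))) (Reset (plug (lift_ctx 0 E) (Var 0)))"
    using shift_elim_continuation[OF d(3)] by (rule shift_elim.reset)
  from capture_step_matched[OF d(2) d(4) this] show ?thesis
    using d r by simp
next
  fix t1' assume "r = Reset t1'" "step t1 t1'"
  then show ?thesis using step_matched_Reset IH by simp
qed

lemma captured_recapture_step_matched:
  assumes E0: "pure_ctx E0" and s: "shift_elim n s0 s1"
    and B: "shift_elim m (Reset (plug (lift_ctx 0 E0) (Var 0))) (Reset B)"
    and E: "App (Lam (Reset B)) s1 = plug E (Shift u)" "pure_ctx E"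
  shows "step_matched (n + m + 2) (Reset (plug E0 s0))
           (Reset (subst u 0 (Lam (Reset (plug (lift_ctx 0 E) (Var 0))))))"
proof -
  obtain E' where E': "E = CAppR (Lam (Reset B)) E'" "s1 = plug E' (Shift u)" "pure_ctx E'"
    using E by (cases E) (auto dest: sym)
  then obtain E0' x a b where d: "s0 = plug E0' x" "pure_ctx E0'" "shift_elim_ctx a E0' E'"
    "shift_elim b x (Shift u)" "n = a + b"
    using shift_elim_decompose s by blast
  \<comment> \<open>the captured continuations are themselves related by rule captured, with the hole as argument\<close>
  have "shift_elim m (Reset (plug (lift_ctx 0 (lift_ctx 0 E0)) (Var 0))) (Reset (lift (Suc 0) B))"
    using shift_elim_lift[OF B, of "Suc 0"] by (simp add: lift_ctx_lift_ctx)
  from shift_elim.captured[OF _ shift_elim_continuation[OF d(3)] this] E0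
  have "shift_elim (a + m + 2) (Reset (plug (lift_ctx 0 (ctx_comp E0 E0')) (Var 0)))
          (Reset (plug (lift_ctx 0 E) (Var 0)))"
    using E' by simp
  from capture_step_matched[OF pure_ctx_comp[OF E0 d(2)] d(4) this] show ?thesis
    using d by (simp add: ac_simps)
qed

lemma captured_step_matched:
  assumes E0: "pure_ctx E0" and s: "shift_elim n s0 s1"
    and B: "shift_elim m (Reset (plug (lift_ctx 0 E0) (Var 0))) (Reset B)"
    and IH: "\<And>s1'. step s1 s1' \<Longrightarrow> step_matched n s0 s1'"
    and "step (Reset (App (Lam (Reset B)) s1)) r"
  shows "step_matched (n + m + 2) (Reset (plug E0 s0)) r"
  using assms(5)
proof (rule step_ResetE)
  assume "is_val (App (Lam (Reset B)) s1)"
  then show ?thesis by (simp add: is_val_def)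
next
  fix E u assume "App (Lam (Reset B)) s1 = plug E (Shift u)"
    "r = Reset (subst u 0 (Lam (Reset (plug (lift_ctx 0 E) (Var 0)))))" "pure_ctx E"
  then show ?thesis using captured_recapture_step_matched[OF E0 s B] by simp
next
  fix r' assume r: "r = Reset r'" "step (App (Lam (Reset B)) s1) r'"
  from r(2) show ?thesis
  proof (rule step_AppE)
    fix b assume b: "Lam (Reset B) = Lam b" "r' = subst b 0 s1" "is_val s1"
    then have "is_val s0" "n = 0" using shift_elim_val[OF s] by auto
    with shift_elim_subst[OF B, of s0 s1 0] s
    have "shift_elim m (Reset (plug E0 s0)) (Reset (subst B 0 s1))" by simp
    then show ?thesis
      unfolding step_matched_def using shift_elim.reset_reset b r \<open>n = 0\<close> by auto
  next
    fix s1' assume "r' = App (Lam (Reset B)) s1'" "is_val (Lam (Reset B))" "step s1 s1'"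
    then show ?thesis using step_matched_captured[OF E0 B IH] r by simp
  qed auto
qed

lemma reset_reset_step_matched:
  assumes ab: "shift_elim n (Reset a) (Reset b)"
    and IH: "\<And>r. step (Reset b) r \<Longrightarrow> step_matched n (Reset a) r"
    and "step (Reset (Reset b)) r"
  shows "step_matched (Suc n) (Reset a) r"
  using assms(3)
proof (rule step_ResetE)
  fix r' assume r: "r = Reset r'" "step (Reset b) r'"
  show ?thesis
  proof (cases "is_val b")
    case True
    then have "r' = b" using r(2) step.reset_val step_deterministic by blast
    then show ?thesis unfolding step_matched_def using r ab by auto
  next
    case False
    with r(2) obtain b' where b': "r' = Reset b'"
      by (auto elim!: step_ResetE)
    from IH[OF r(2)] consider (stutter) k where "k < n" "shift_elim k (Reset a) r'"
      | (step) a' k where "step (Reset a) (Reset a')" "shift_elim k (Reset a') r'"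
      unfolding step_matched_def b' by (metis is_prog_def shift_elim_Reset_prog)
    then show ?thesis
    proof cases
      case stutter
      then show ?thesis unfolding step_matched_def using r b' shift_elim.reset_reset by auto
    next
      case step
      then show ?thesis unfolding step_matched_def using r b' shift_elim.reset_reset by blast
    qed
  qed
qed (auto simp: is_val_def dest: sym)

lemma shift_elim_right_step: "shift_elim n t0 t1 \<Longrightarrow> step t1 t1' \<Longrightarrow> step_matched n t0 t1'"
proof (induction arbitrary: t1' rule: shift_elim.induct)
  case (app n t0 t1 m s0 s1)
  then show ?case by (rule App_step_matched)
next
  case (reset n t0 t1)
  then show ?case by (rule Reset_step_matched)
next
  case (captured E0 n s0 s1 m B)
  then show ?case by (blast intro: captured_step_matched)
next
  case (reset_reset n a b)
  then show ?case by (rule reset_reset_step_matched)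
qed auto

lemma shift_elim_left_step:
  "shift_elim n t0 t1 \<Longrightarrow> closed_at 0 t1 \<Longrightarrow> is_prog t1 \<Longrightarrow> step t0 t0' \<Longrightarrow>
    \<exists>t1'. step\<^sup>*\<^sup>* t1 t1' \<and> related t0' t1'"
proof (induction n arbitrary: t1 rule: less_induct)
  case (less n)
  obtain t1'' where t1: "step t1 t1''"
    using prog_has_step less.prems by blast
  from shift_elim_right_step[OF less.prems(1) t1]
  consider (stutter) m where "m < n" "shift_elim m t0 t1''"
    | (step) t0'' m where "step t0 t0''" "shift_elim m t0'' t1''"
    unfolding step_matched_def by blast
  then show ?case
  proof cases
    case stutter
    have "\<not> is_val t1''"
      using shift_elim_val[OF stutter(2)] val_no_step less.prems(4) by blast
    then have "is_prog t1''"
      using step_prog[OF t1 less.prems(3)] by blast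
    with less.IH[OF stutter] step_closed_at[OF t1 less.prems(2)] less.prems(4)
    obtain t1' where "step\<^sup>*\<^sup>* t1'' t1'" "related t0' t1'"
      by blast
    then show ?thesis using t1 converse_rtranclp_into_rtranclp by metis
  next
    case step
    then have "t0'' = t0'" using step_deterministic less.prems(4) by blast
    then show ?thesis unfolding related_def using t1 step by blast
  qed
qed

section \<open>The environmental bisimulation\<close>

definition bisim_envs :: "env set" where
  "bisim_envs = {E. is_env E \<and> (\<forall>(a, b) \<in> E. related a b)}"

definition bisim_triples :: "(env \<times> trm \<times> trm) set" where
  "bisim_triples = {(E, t0, t1). E \<in> bisim_envs \<and> closed t0 \<and> closed t1 \<and> related t0 t1}"

definition matching_outcomes :: "trm \<Rightarrow> trm \<Rightarrow> bool" where
  "matching_outcomes q0 q1 \<longleftrightarrow> closed q0 \<and> closed q1 \<and> related q0 q1 \<and>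
     (is_prog q0 \<and> is_prog q1 \<or> is_val q0 \<and> is_val q1)"

lemma tilde_raw_related: "tilde_raw E a b \<Longrightarrow> E \<in> bisim_envs \<Longrightarrow> related a b"
  by (induction rule: tilde_raw.induct) (auto simp: bisim_envs_def related_def intro: shift_elim.intros)

lemma ctx_hat_shift_elim_ctx: "ctx_hat E E0 E1 \<Longrightarrow> E \<in> bisim_envs \<Longrightarrow> \<exists>a. shift_elim_ctx a E0 E1"
proof (induction rule: ctx_hat.induct)
  case (appR F0 F1 v0 v1)
  then show ?case
    by (auto simp: tilde_def related_def dest!: tilde_raw_related)
      (blast intro: shift_elim_ctx.app_right)
next
  case (appL F0 F1 t0 t1)
  then show ?case
    by (auto simp: tilde_def related_def dest!: tilde_raw_related)
      (blast intro: shift_elim_ctx.app_left)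
qed (auto intro: shift_elim_ctx.intros)

lemma ctx_hat_closed:
  "ctx_hat E E0 E1 \<Longrightarrow> closed t \<Longrightarrow> closed s \<Longrightarrow> closed (plug E0 t) \<and> closed (plug E1 s)"
  by (induction arbitrary: t s rule: ctx_hat.induct) (auto simp: tilde_def closed_iff_closed_at_0)

lemma related_outcomes:
  assumes "related q0 q1" "is_prog q0 \<or> is_val q0" "is_prog q1 \<or> is_val q1"
  shows "is_prog q0 \<and> is_prog q1 \<or> is_val q0 \<and> is_val q1"
  using assms shift_elim_val shift_elim_Reset_prog unfolding related_def is_prog_def by blast

lemma bisim_triples_plug:
  assumes "(E, t0, t1) \<in> bisim_triples" "pure_ctx E0" "pure_ctx E1" "ctx_hat E E0 E1"
  shows "(E, Reset (plug E0 t0), Reset (plug E1 t1)) \<in> bisim_triples"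
proof -
  from assms(1) have E: "E \<in> bisim_envs" and t: "closed t0" "closed t1" "related t0 t1"
    by (auto simp: bisim_triples_def)
  from ctx_hat_shift_elim_ctx[OF assms(4) E] obtain a where "shift_elim_ctx a E0 E1" ..
  with t(3) have "related (Reset (plug E0 t0)) (Reset (plug E1 t1))"
    unfolding related_def by (blast intro: shift_elim.reset shift_elim_plug)
  with E ctx_hat_closed[OF assms(4) t(1,2)] show ?thesis
    by (simp add: bisim_triples_def closed_def)
qed

lemma bisim_left_step:
  assumes "(E, p0, p1) \<in> bisim_triples" "is_prog p0" "is_prog p1" "step p0 q0"
  shows "\<exists>q1. step\<^sup>*\<^sup>* p1 q1 \<and> matching_outcomes q0 q1"
proof -
  from assms(1) have p: "closed_at 0 p0" "closed_at 0 p1" "related p0 p1"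
    by (auto simp: bisim_triples_def closed_iff_closed_at_0)
  then obtain n where "shift_elim n p0 p1" by (auto simp: related_def)
  from shift_elim_left_step[OF this p(2) assms(3,4)]
  obtain q1 where q1: "step\<^sup>*\<^sup>* p1 q1" "related q0 q1" by blast
  moreover have "closed q0" "closed q1"
    using step_closed_at[OF assms(4) p(1)] steps_closed_at[OF q1(1) p(2)]
    by (simp_all add: closed_iff_closed_at_0)
  moreover have "is_prog q0 \<and> is_prog q1 \<or> is_val q0 \<and> is_val q1"
    using related_outcomes[OF q1(2) step_prog[OF assms(4,2)] steps_prog[OF q1(1) assms(3)]] .
  ultimately show ?thesis unfolding matching_outcomes_def by blast
qed

lemma bisim_right_step:
  assumes "(E, p0, p1) \<in> bisim_triples" "is_prog p0" "is_prog p1" "step p1 q1"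
  shows "\<exists>q0. step\<^sup>*\<^sup>* p0 q0 \<and> matching_outcomes q0 q1"
proof -
  from assms(1) have p: "closed_at 0 p0" "closed_at 0 p1" "related p0 p1"
    by (auto simp: bisim_triples_def closed_iff_closed_at_0)
  then obtain n where "shift_elim n p0 p1" by (auto simp: related_def)
  from shift_elim_right_step[OF this assms(4)]
  obtain q0 where q0: "step\<^sup>*\<^sup>* p0 q0" "related q0 q1"
    unfolding step_matched_def related_def by blast
  moreover have "closed q0" "closed q1"
    using steps_closed_at[OF q0(1) p(1)] step_closed_at[OF assms(4) p(2)]
    by (simp_all add: closed_iff_closed_at_0)
  moreover have "is_prog q0 \<and> is_prog q1 \<or> is_val q0 \<and> is_val q1"
    using related_outcomes[OF q0(2) steps_prog[OF q0(1) assms(2)] step_prog[OF assms(4,3)]] .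
  ultimately show ?thesis unfolding matching_outcomes_def by blast
qed

lemma matching_outcomes_bisim:
  assumes "E \<in> bisim_envs" "matching_outcomes q0 q1"
  shows "is_prog q0 \<or> is_prog q1 \<Longrightarrow> is_prog q0 \<and> is_prog q1 \<and> (E, q0, q1) \<in> bisim_triples"
    and "is_val q0 \<or> is_val q1 \<Longrightarrow> is_val q0 \<and> is_val q1 \<and> insert (q0, q1) E \<in> bisim_envs"
  using assms prog_not_val
  by (auto simp: matching_outcomes_def bisim_triples_def bisim_envs_def is_env_def)

lemma bisim_triples_prog_steps:
  assumes T: "(E, p0, p1) \<in> bisim_triples" and P: "is_prog p0" "is_prog p1"
  shows "(\<forall>p0'. red p0 p0' \<and> is_prog p0' \<longrightarrow>
            (\<exists>p1'. reds p1 p1' \<and> is_prog p1' \<and> (E, p0', p1') \<in> bisim_triples)) \<and>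
         (\<forall>v0. red p0 v0 \<and> is_val v0 \<longrightarrow>
            (\<exists>v1. reds p1 v1 \<and> is_val v1 \<and> insert (v0, v1) E \<in> bisim_envs)) \<and>
         (\<forall>p1'. red p1 p1' \<and> is_prog p1' \<longrightarrow>
            (\<exists>p0'. reds p0 p0' \<and> is_prog p0' \<and> (E, p0', p1') \<in> bisim_triples)) \<and>
         (\<forall>v1. red p1 v1 \<and> is_val v1 \<longrightarrow>
            (\<exists>v0. reds p0 v0 \<and> is_val v0 \<and> insert (v0, v1) E \<in> bisim_envs))"
proof -
  have E: "E \<in> bisim_envs" using T by (simp add: bisim_triples_def)
  note left = bisim_left_step[OF T P] and right = bisim_right_step[OF T P]
  note outcome = matching_outcomes_bisim[OF E]
  show ?thesis unfolding red_eq_step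
    by (intro conjI allI impI; elim conjE)
       (metis left outcome, metis left outcome, metis right outcome, metis right outcome)
qed

lemma bisim_triples_subst:
  assumes E: "E \<in> bisim_envs" and "(Lam t0, Lam t1) \<in> E"
    and v: "is_val v0" "is_val v1" "tilde E v0 v1"
  shows "(E, subst t0 0 v0, subst t1 0 v1) \<in> bisim_triples"
proof -
  from assms have "related (Lam t0) (Lam t1)" "closed_at 0 (Lam t0)" "closed_at 0 (Lam t1)"
    by (auto simp: bisim_envs_def is_env_def closed_iff_closed_at_0 simp del: closed_at.simps)
  then obtain k where t: "shift_elim k t0 t1" "closed_at 1 t0" "closed_at 1 t1"
    by (auto simp: related_def dest: shift_elim_Lam_inv)
  from v E have "related v0 v1" "closed_at 0 v0" "closed_at 0 v1"
    by (auto simp: tilde_def closed_iff_closed_at_0 intro: tilde_raw_related)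
  then obtain j where "shift_elim j v0 v1" by (auto simp: related_def)
  with v have "shift_elim 0 v0 v1" using shift_elim_val by blast
  with t \<open>closed_at 0 v0\<close> \<open>closed_at 0 v1\<close> E show ?thesis
    by (auto simp: bisim_triples_def related_def closed_iff_closed_at_0
        intro: shift_elim_subst closed_at_subst)
qed

lemma env_bisim_shift_elim: "env_bisim bisim_envs bisim_triples"
  unfolding env_bisim_def
proof (intro conjI)
  show "\<forall>E\<in>bisim_envs. is_env E"
    by (simp add: bisim_envs_def)
  show "\<forall>E t0 t1. (E, t0, t1) \<in> bisim_triples \<longrightarrow> is_env E \<and> closed t0 \<and> closed t1"
    by (simp add: bisim_triples_def bisim_envs_def)
qed (use bisim_triples_plug bisim_triples_prog_steps bisim_triples_subst in blast)+

lemma fv_abst: "fv (abst x u) = fv u - {x}"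
proof -
  have "{i. Suc i \<in> abst_fun x 0 ` fv u} = fv u - {x}"
    by (auto simp: abst_fun_def image_iff split: if_splits)
  then show ?thesis
    by (simp add: abst_def abst_aux_eq_ren fv_ren)
qed

lemma fv_abst_vars: "fv (abst_vars xs u) = fv u - set xs"
  by (induction xs) (auto simp: abst_vars_def fv_abst)

lemma fv_lift_0: "fv (lift 0 t) = Suc ` fv t"
  by (simp add: lift_eq_ren fv_ren lift_fun_def)

lemma fv_Shift_App_Var_lift: "fv (Shift (App (Var 0) (lift 0 t))) = fv t"
  by (simp add: fv_lift_0 image_image)

lemma related_abst_vars: "related a b \<Longrightarrow> related (abst_vars xs a) (abst_vars xs b)"
proof (induction xs)
  case (Cons x xs)
  then show ?case
    by (auto simp: abst_vars_def abst_def abst_aux_eq_ren related_def intro: shift_elim.lam shift_elim_ren)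
qed (simp add: abst_vars_def)

theorem lemma19:
  fixes t :: trm
  shows "open_bisimilar t (Shift (App (Var 0) (lift 0 t)))"
proof -
  define t' where "t' = Shift (App (Var 0) (lift 0 t))"
  define xs where "xs = sorted_list_of_set (fv t \<union> fv t')"
  have "fv t' = fv t"
    unfolding t'_def by (rule fv_Shift_App_Var_lift)
  moreover from this have "set xs = fv t"
    unfolding xs_def by (simp add: finite_fv)
  ultimately have closed: "closed (abst_vars xs t)" "closed (abst_vars xs t')"
    by (simp_all add: closed_def fv_abst_vars)
  obtain n where "shift_elim n t t"
    using shift_elim_refl by blast
  then have "related t t'"
    unfolding t'_def related_def by (blast intro: shift_elim.marker)
  with closed have "({}, abst_vars xs t, abst_vars xs t') \<in> bisim_triples"
    by (simp add: bisim_triples_def bisim_envs_def is_env_def related_abst_vars)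
  with env_bisim_shift_elim have "prog_bisimilar {} (abst_vars xs t) (abst_vars xs t')"
    unfolding prog_bisimilar_def by blast
  then show ?thesis
    unfolding open_bisimilar_def Let_def xs_def t'_def .
qed

end
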